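(* Let $N>0$, $R=\mathbb{Q}[x_1,x_2,y_1,y_2]$, and let $t_i,w_i,s_i,u_i$ and $X_\bullet=\{(u_1,u_2),(s_1,s_2)\}$, $X_\circ=\{(w_1,w_2),(t_1,t_2)\}$ be as in the context. Put $$\gamma=\frac{\partial u_1}{\partial y_1}-\frac{\partial u_1}{\partial y_2}-\frac12\frac{\partial u_2}{\partial y_2}(x_2+y_2)+\frac12\frac{\partial u_2}{\partial y_1}(x_1+y_1).$$ Then the partial differential equation $2z+\frac{\partial z}{\partial y_1}(y_1-x_1)+\frac{\partial z}{\partial y_2}(y_2-x_2)=\gamma$ in an unknown $z$ has a unique polynomial solution $\Omega_2(\gamma)\in R$, and the $R$-linear map $\chi_1:X_\bullet\to X_\circ$ defined by $\chi_1(1)=1+\Omega_2(\gamma)\,\theta_1\theta_2$, $\chi_1(\theta_1)=\theta_1+\theta_2$, $\chi_1(\theta_2)=\frac12(x_2+y_2)\theta_1+\frac12(x_1+y_1)\theta_2$, $\chi_1(\theta_1\theta_2)=\frac12(x_1+y_1-x_2-y_2)\theta_1\theta_2$ is a morphism of graded matrix factorisations such that $\pi_\circ\circ\chi_1$ is homotopic to $\mathrm{can}\circ\pi_\bullet$, where $\mathrm{can}:R/(s_1,s_2)\to R/(t_1,t_2)$ is the canonical surjection.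
   Context: Variables have degree $2$. $t_i=y_i-x_i$, $w_i=(y_i^{N+1}-x_i^{N+1})/(y_i-x_i)$, $s_1=y_1+y_2-x_1-x_2$, $s_2=y_1y_2-x_1x_2$, and $u_1,u_2\in R$ are homogeneous with $W:=y_1^{N+1}+y_2^{N+1}-x_1^{N+1}-x_2^{N+1}=u_1s_1+u_2s_2$ and $u_i(y_1,y_2,x_1,x_2)=u_i(x_1,x_2,y_1,y_2)$. For sequences $\boldsymbol a,\boldsymbol b$ of homogeneous elements with $\deg a_i+\deg b_i=2c$ (here $c=N+1$), the cyclic Koszul matrix factorisation $\{\boldsymbol a,\boldsymbol b\}$ of $\sum a_ib_i$ is the exterior algebra $\bigwedge F$ on $F=R\theta_1\oplus R\theta_2$, with $\theta_i$ of $\mathbb{Z}_2$-degree $1$ and internal degree $\deg a_i-c$, and differential $\delta_++\delta_-$ where $\delta_+=(\sum_ib_i\theta_i^* )\lrcorner(-)$ (contraction) and $\delta_-=(\sum_ia_i\theta_i)\wedge(-)$. $\pi_\bullet:X_\bullet\to R/(s_1,s_2)$ and $\pi_\circ:X_\circ\to R/(t_1,t_2)$ are the morphisms of linear factorisations (modules viewed as factorisations of zero) given by projecting onto $\bigwedge^0F=R$ and then onto the quotient. *)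

theory Defs
  imports Complex_Main "HOL-Library.Poly_Mapping"
begin

datatype var = X1 | X2 | Y1 | Y2

type_synonym mpoly = "(var \<Rightarrow>\<^sub>0 nat) \<Rightarrow>\<^sub>0 rat"

definition Var :: "var \<Rightarrow> mpoly" where
  "Var v = Poly_Mapping.single (Poly_Mapping.single v 1) 1"

definition Const :: "rat \<Rightarrow> mpoly" where
  "Const c = Poly_Mapping.single 0 c"

definition pderiv_var :: "var \<Rightarrow> mpoly \<Rightarrow> mpoly" where
  "pderiv_var v p = (\<Sum>m\<in>Poly_Mapping.keys p.
     Poly_Mapping.single (m - Poly_Mapping.single v (1::nat)) (of_nat (Poly_Mapping.lookup m v) * Poly_Mapping.lookup p m))"

definition msubst :: "(var \<Rightarrow> mpoly) \<Rightarrow> mpoly \<Rightarrow> mpoly" where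
  "msubst \<sigma> p = (\<Sum>m\<in>Poly_Mapping.keys p. Const (Poly_Mapping.lookup p m) * (\<Prod>v\<in>Poly_Mapping.keys m. \<sigma> v ^ Poly_Mapping.lookup m v))"

definition swap_xy :: "var \<Rightarrow> mpoly" where
  "swap_xy v = (case v of X1 \<Rightarrow> Var Y1 | X2 \<Rightarrow> Var Y2 | Y1 \<Rightarrow> Var X1 | Y2 \<Rightarrow> Var X2)"

text \<open>Total degree of a monomial (standard grading; the paper's degree is twice this).\<close>
definition mon_deg :: "(var \<Rightarrow>\<^sub>0 nat) \<Rightarrow> nat" where
  "mon_deg m = (\<Sum>v\<in>Poly_Mapping.keys m. Poly_Mapping.lookup m v)"

definition homogeneous :: "mpoly \<Rightarrow> bool" where
  "homogeneous p \<longleftrightarrow> (\<exists>d. \<forall>m\<in>Poly_Mapping.keys p. mon_deg m = d)"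

definition hom_of_deg :: "int \<Rightarrow> mpoly \<Rightarrow> bool" where
  "hom_of_deg d p \<longleftrightarrow> (\<forall>m\<in>Poly_Mapping.keys p. 2 * int (mon_deg m) = d)"

definition t1 :: mpoly where "t1 = Var Y1 - Var X1"
definition t2 :: mpoly where "t2 = Var Y2 - Var X2"

text \<open>w_i = (y_i^(N+1) - x_i^(N+1)) / (y_i - x_i), written as the exact quotient.\<close>
definition wpoly :: "nat \<Rightarrow> var \<Rightarrow> var \<Rightarrow> mpoly" where
  "wpoly N x y = (\<Sum>k\<le>N. Var y ^ k * Var x ^ (N - k))"

definition w1 :: "nat \<Rightarrow> mpoly" where "w1 N = wpoly N X1 Y1"
definition w2 :: "nat \<Rightarrow> mpoly" where "w2 N = wpoly N X2 Y2"

definition s1 :: mpoly where "s1 = Var Y1 + Var Y2 - Var X1 - Var X2"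
definition s2 :: mpoly where "s2 = Var Y1 * Var Y2 - Var X1 * Var X2"

definition Wpot :: "nat \<Rightarrow> mpoly" where
  "Wpot N = Var Y1 ^ (N+1) + Var Y2 ^ (N+1) - Var X1 ^ (N+1) - Var X2 ^ (N+1)"

definition gamma :: "mpoly \<Rightarrow> mpoly \<Rightarrow> mpoly" where
  "gamma u1 u2 = pderiv_var Y1 u1 - pderiv_var Y2 u1
     - Const (1/2) * pderiv_var Y2 u2 * (Var X2 + Var Y2)
     + Const (1/2) * pderiv_var Y1 u2 * (Var X1 + Var Y1)"

definition pde_sol :: "mpoly \<Rightarrow> mpoly \<Rightarrow> bool" where
  "pde_sol g z \<longleftrightarrow>
     2 * z + pderiv_var Y1 z * (Var Y1 - Var X1) + pderiv_var Y2 z * (Var Y2 - Var X2) = g"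

text \<open>Basis 1, theta1, theta2, theta1 theta2; elements are coefficient functions.\<close>
datatype ebasis = E0 | E1 | E2 | E12

type_synonym ext = "ebasis \<Rightarrow> mpoly"

definition ext_add :: "ext \<Rightarrow> ext \<Rightarrow> ext" where
  "ext_add f g = (\<lambda>e. f e + g e)"

definition ext_smult :: "mpoly \<Rightarrow> ext \<Rightarrow> ext" where
  "ext_smult r f = (\<lambda>e. r * f e)"

definition ext_wedge :: "ext \<Rightarrow> ext \<Rightarrow> ext" where
  "ext_wedge f g = (\<lambda>e. case e of
      E0 \<Rightarrow> f E0 * g E0
    | E1 \<Rightarrow> f E0 * g E1 + f E1 * g E0
    | E2 \<Rightarrow> f E0 * g E2 + f E2 * g E0
    | E12 \<Rightarrow> f E0 * g E12 + f E12 * g E0 + f E1 * g E2 - f E2 * g E1)"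

text \<open>Contraction with the dual basis vectors theta1^*, theta2^* (odd derivations).\<close>
definition contr1 :: "ext \<Rightarrow> ext" where
  "contr1 f = (\<lambda>e. case e of E0 \<Rightarrow> f E1 | E1 \<Rightarrow> 0 | E2 \<Rightarrow> f E12 | E12 \<Rightarrow> 0)"

definition contr2 :: "ext \<Rightarrow> ext" where
  "contr2 f = (\<lambda>e. case e of E0 \<Rightarrow> f E2 | E1 \<Rightarrow> - f E12 | E2 \<Rightarrow> 0 | E12 \<Rightarrow> 0)"

definition theta1 :: ext where "theta1 = (\<lambda>e. if e = E1 then 1 else 0)"
definition theta2 :: ext where "theta2 = (\<lambda>e. if e = E2 then 1 else 0)"

text \<open>Differential of the cyclic Koszul factorisation {(a1,a2),(b1,b2)}:
  delta_plus = (b1 theta1^* + b2 theta2^*) contracted, delta_minus = (a1 theta1 + a2 theta2) wedge.\<close>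
definition koszul_d :: "mpoly \<Rightarrow> mpoly \<Rightarrow> mpoly \<Rightarrow> mpoly \<Rightarrow> ext \<Rightarrow> ext" where
  "koszul_d a1 a2 b1 b2 f =
     ext_add (ext_add (ext_smult b1 (contr1 f)) (ext_smult b2 (contr2 f)))
             (ext_wedge (ext_add (ext_smult a1 theta1) (ext_smult a2 theta2)) f)"

text \<open>Internal degrees of the basis elements: theta_i has degree c - deg a_i.\<close>
definition theta_deg :: "int \<Rightarrow> int \<Rightarrow> int \<Rightarrow> ebasis \<Rightarrow> int" where
  "theta_deg c da1 da2 e = (case e of E0 \<Rightarrow> 0 | E1 \<Rightarrow> c - da1 | E2 \<Rightarrow> c - da2
                              | E12 \<Rightarrow> (c - da1) + (c - da2))"

definition ext_hom_deg :: "(ebasis \<Rightarrow> int) \<Rightarrow> int \<Rightarrow> ext \<Rightarrow> bool" where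
  "ext_hom_deg dg d f \<longleftrightarrow> (\<forall>e. hom_of_deg (d - dg e) (f e))"

definition ext_even :: "ext \<Rightarrow> bool" where
  "ext_even f \<longleftrightarrow> f E1 = 0 \<and> f E2 = 0"

definition ext_odd :: "ext \<Rightarrow> bool" where
  "ext_odd f \<longleftrightarrow> f E0 = 0 \<and> f E12 = 0"

definition lin_ext :: "(ebasis \<Rightarrow> ext) \<Rightarrow> ext \<Rightarrow> ext" where
  "lin_ext img f = (\<lambda>e'. f E0 * img E0 e' + f E1 * img E1 e' + f E2 * img E2 e' + f E12 * img E12 e')"

definition graded_mf_morphism ::
  "(ext \<Rightarrow> ext) \<Rightarrow> (ext \<Rightarrow> ext) \<Rightarrow> (ebasis \<Rightarrow> int) \<Rightarrow> (ext \<Rightarrow> ext) \<Rightarrow> (ebasis \<Rightarrow> int)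
     \<Rightarrow> bool" where
  "graded_mf_morphism phi dX dgX dY dgY \<longleftrightarrow>
     (\<forall>f. dY (phi f) = phi (dX f)) \<and>
     (\<forall>f. ext_even f \<longrightarrow> ext_even (phi f)) \<and>
     (\<forall>f. ext_odd f \<longrightarrow> ext_odd (phi f)) \<and>
     (\<forall>d f. ext_hom_deg dgX d f \<longrightarrow> ext_hom_deg dgY d (phi f))"

definition in_ideal2 :: "mpoly \<Rightarrow> mpoly \<Rightarrow> mpoly \<Rightarrow> bool" where
  "in_ideal2 p q r \<longleftrightarrow> (\<exists>a b. r = a * p + b * q)"

text \<open>Projection onto wedge^0 F = R (followed by the quotient map, which is taken
  into account by comparing representatives modulo the ideal).\<close>
definition proj0 :: "ext \<Rightarrow> mpoly" where
  "proj0 f = f E0"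

text \<open>Two morphisms F, G : X \<rightarrow> R/(p,q) (the module viewed as a factorisation of 0,
  concentrated in even degree, zero differential), given by representative maps into R,
  are homotopic iff F - G = h o dX for an odd R-linear h : X \<rightarrow> R/(p,q); such h
  vanishes on the even part and is given by h(theta_i) = h_i.\<close>
definition homotopic_to_module ::
  "(ext \<Rightarrow> ext) \<Rightarrow> mpoly \<Rightarrow> mpoly \<Rightarrow> (ext \<Rightarrow> mpoly) \<Rightarrow> (ext \<Rightarrow> mpoly) \<Rightarrow> bool" where
  "homotopic_to_module dX p q F G \<longleftrightarrow>
     (\<exists>h1 h2. \<forall>f. in_ideal2 p q (F f - G f - (h1 * dX f E1 + h2 * dX f E2)))"

definition chi1_img :: "mpoly \<Rightarrow> ebasis \<Rightarrow> ext" where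
  "chi1_img Om e = (case e of
      E0 \<Rightarrow> (\<lambda>e'. case e' of E0 \<Rightarrow> 1 | E12 \<Rightarrow> Om | _ \<Rightarrow> 0)
    | E1 \<Rightarrow> (\<lambda>e'. case e' of E1 \<Rightarrow> 1 | E2 \<Rightarrow> 1 | _ \<Rightarrow> 0)
    | E2 \<Rightarrow> (\<lambda>e'. case e' of E1 \<Rightarrow> Const (1/2) * (Var X2 + Var Y2)
                            | E2 \<Rightarrow> Const (1/2) * (Var X1 + Var Y1) | _ \<Rightarrow> 0)
    | E12 \<Rightarrow> (\<lambda>e'. case e' of
               E12 \<Rightarrow> Const (1/2) * (Var X1 + Var Y1 - Var X2 - Var Y2) | _ \<Rightarrow> 0))"

definition chi1 :: "mpoly \<Rightarrow> ext \<Rightarrow> ext" where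
  "chi1 Om = lin_ext (chi1_img Om)"

end

theory Submission
  imports Defs
begin

text \<open>Since \<open>W = t\<^sub>1 w\<^sub>1 + t\<^sub>2 w\<^sub>2\<close>, \<open>s\<^sub>1 = t\<^sub>1 + t\<^sub>2\<close> and
  \<open>s\<^sub>2 = t\<^sub>1 p\<^sub>2 + t\<^sub>2 p\<^sub>1\<close> with \<open>p\<^sub>i = (x\<^sub>i + y\<^sub>i)/2\<close>, the hypothesis
  \<open>W = u\<^sub>1 s\<^sub>1 + u\<^sub>2 s\<^sub>2\<close> says \<open>t\<^sub>1 A = t\<^sub>2 B\<close> for \<open>A = w\<^sub>1 - u\<^sub>1 - u\<^sub>2 p\<^sub>2\<close>
  and \<open>B = u\<^sub>1 + u\<^sub>2 p\<^sub>1 - w\<^sub>2\<close>. As \<open>t\<^sub>2 = y\<^sub>2 - x\<^sub>2\<close> is coprime to \<open>t\<^sub>1\<close>, there is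
  \<open>\<Omega>\<close> with \<open>t\<^sub>2 \<Omega> = A\<close> and \<open>t\<^sub>1 \<Omega> = B\<close>; it is homogeneous because \<open>A\<close> is.
  Differentiating these equations in \<open>y\<^sub>2\<close> and \<open>y\<^sub>1\<close> and adding shows that \<open>\<Omega>\<close>
  solves the PDE, and the solution is unique since the operator multiplies the coefficient of
  a monomial of maximal \<open>y\<close>-degree by a positive number. With \<open>\<Omega>\<close> in hand, the
  morphism condition for \<open>\<chi>\<^sub>1\<close> is a polynomial identity in each component, and
  \<open>\<pi>\<^sub>\<circ> \<circ> \<chi>\<^sub>1\<close> agrees with \<open>\<pi>\<^sub>\<bullet>\<close> on the nose.\<close>

section \<open>Coefficients and partial derivatives\<close>

abbreviation lookup where "lookup \<equiv> Poly_Mapping.lookup"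
abbreviation keys where "keys \<equiv> Poly_Mapping.keys"
abbreviation single where "single \<equiv> Poly_Mapping.single"

type_synonym monomial = "var \<Rightarrow>\<^sub>0 nat"

fun var_index :: "var \<Rightarrow> nat" where
  "var_index X1 = 0" | "var_index X2 = 1" | "var_index Y1 = 2" | "var_index Y2 = 3"

text \<open>Any linear order on the variables makes the library's integral-domain instance apply to
  \<open>mpoly\<close>; no other use is made of it.\<close>
instantiation var :: linorder
begin
definition "less_eq_var a b \<longleftrightarrow> var_index a \<le> var_index b"
definition "less_var a b \<longleftrightarrow> var_index a < var_index b"
instance
proof
  fix a b :: var
  show "a \<le> b \<Longrightarrow> b \<le> a \<Longrightarrow> a = b"
    unfolding less_eq_var_def by (cases a; cases b) simp_all
qed (auto simp: less_eq_var_def less_var_def)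
end

lemma add_single_diff_single [simp]: "(n::monomial) + single v 1 - single v 1 = n"
  by (rule poly_mapping_eqI) (simp add: lookup_add lookup_minus)

lemma diff_single_add_single:
  "0 < lookup (n::monomial) v \<Longrightarrow> n - single v 1 + single v 1 = n"
  by (auto simp: poly_mapping_eq_iff fun_eq_iff lookup_add lookup_minus lookup_single when_def)

lemma single_add_eq_iff:
  "(n = single v 1 + (q::monomial)) \<longleftrightarrow> 0 < lookup n v \<and> q = n - single v 1"
  by (auto simp: poly_mapping_eq_iff fun_eq_iff lookup_add lookup_minus lookup_single when_def)

lemma lookup_Var_mult:
  "lookup (Var v * p) n = (if 0 < lookup n v then lookup p (n - single v 1) else 0)"
proof -
  have "lookup (Var v * p) n = Sum_any (\<lambda>q. lookup p q when n = single v 1 + q)"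
    unfolding Var_def lookup_mult lookup_single by (simp add: when_mult)
  also have "\<dots> = Sum_any (\<lambda>q. lookup p q when 0 < lookup n v \<and> q = n - single v 1)"
    unfolding single_add_eq_iff ..
  finally show ?thesis
    by (cases "0 < lookup n v") (simp_all add: conj_commute)
qed

lemma lookup_Const_mult: "lookup (Const c * p) n = c * lookup p n"
  unfolding Const_def lookup_mult lookup_single by (simp add: when_mult mult_when)

lemma lookup_pderiv_var:
  "lookup (pderiv_var v p) n = of_nat (lookup n v + 1) * lookup p (n + single v 1)"
proof -
  have "(of_nat (lookup m v) * lookup p m when m - single v 1 = n)
      = (of_nat (lookup m v) * lookup p m when m = n + single v 1)" for m
  proof (cases "0 < lookup m v")
    case True
    then have "m - single v 1 = n \<longleftrightarrow> m = n + single v 1"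
      by (metis add_single_diff_single diff_single_add_single)
    then show ?thesis by simp
  qed (auto simp: lookup_add)
  then have "lookup (pderiv_var v p) n
      = (\<Sum>m\<in>keys p. of_nat (lookup m v) * lookup p m when m = n + single v 1)"
    unfolding pderiv_var_def lookup_sum lookup_single by simp
  then show ?thesis
    by (cases "n + single v 1 \<in> keys p") (auto simp: when_def lookup_add lookup_single in_keys_iff)
qed

lemma lookup_Var_mult_pderiv_var_same:
  "lookup (Var v * pderiv_var v p) n = of_nat (lookup n v) * lookup p n"
proof (cases "0 < lookup n v")
  case True
  have "lookup (n - single v 1) v + 1 = lookup n v"
    using True by (simp add: lookup_minus lookup_single)
  with True show ?thesis
    by (simp only: lookup_Var_mult lookup_pderiv_var diff_single_add_single if_True)
qed (simp add: lookup_Var_mult)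

lemma lookup_Var_mult_pderiv_var_other:
  assumes "w \<noteq> v"
  shows "lookup (Var w * pderiv_var v p) n =
    (if 0 < lookup n w then of_nat (lookup n v + 1) * lookup p (n - single w 1 + single v 1) else 0)"
proof -
  have "lookup (n - single w 1) v = lookup n v"
    using assms by (simp add: lookup_minus lookup_single)
  then show ?thesis
    by (simp only: lookup_Var_mult lookup_pderiv_var)
qed

lemma pderiv_var_add: "pderiv_var v (p + q) = pderiv_var v p + pderiv_var v q"
  by (rule poly_mapping_eqI) (simp add: lookup_pderiv_var lookup_add algebra_simps)

lemma pderiv_var_diff: "pderiv_var v (p - q) = pderiv_var v p - pderiv_var v q"
  by (rule poly_mapping_eqI) (simp add: lookup_pderiv_var lookup_minus algebra_simps)

lemma pderiv_var_Const_mult: "pderiv_var v (Const c * p) = Const c * pderiv_var v p"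
  by (rule poly_mapping_eqI) (simp add: lookup_pderiv_var lookup_Const_mult)

lemma pderiv_var_Var_mult:
  "pderiv_var v (Var w * p) = (if v = w then p else 0) + Var w * pderiv_var v p"
proof (rule poly_mapping_eqI)
  fix n
  show "lookup (pderiv_var v (Var w * p)) n = lookup ((if v = w then p else 0) + Var w * pderiv_var v p) n"
  proof (cases "v = w")
    case True
    have "lookup (pderiv_var v (Var w * p)) n = of_nat (lookup n v + 1) * lookup p n"
      using True by (simp only: lookup_pderiv_var lookup_Var_mult) (simp add: lookup_add)
    with True show ?thesis
      by (simp add: lookup_add lookup_Var_mult_pderiv_var_same algebra_simps)
  next
    case False
    have "n + single v 1 - single w 1 = n - single w 1 + single v 1" if "0 < lookup n w"
      using that False
      by (auto simp: poly_mapping_eq_iff fun_eq_iff lookup_add lookup_minus lookup_single when_def)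
    moreover have "lookup (n + single v 1) w = lookup n w"
      using False by (simp add: lookup_add lookup_single)
    ultimately show ?thesis
      using False
      by (simp add: lookup_add lookup_minus lookup_single lookup_Var_mult_pderiv_var_other
          lookup_pderiv_var lookup_Var_mult)
  qed
qed

section \<open>Monomial expansions, variable-free and homogeneous polynomials\<close>

lemma sum_single_lookup: "(\<Sum>m\<in>keys p. single m (lookup p m)) = p"
proof (rule poly_mapping_eqI)
  fix n
  show "lookup (\<Sum>m\<in>keys p. single m (lookup p m)) n = lookup p n"
    by (cases "n \<in> keys p") (simp_all add: lookup_sum lookup_single when_def in_keys_iff)
qed

lemma poly_mapping_sum_induct:
  fixes p :: "'a \<Rightarrow>\<^sub>0 'b::comm_monoid_add"
  assumes "P 0"
    and "\<And>m. m \<in> keys p \<Longrightarrow> P (single m (lookup p m))"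
    and "\<And>a b. P a \<Longrightarrow> P b \<Longrightarrow> P (a + b)"
  shows "P p"
proof -
  have "P (\<Sum>m\<in>A. single m (lookup p m))" if "A \<subseteq> keys p" for A
    using finite_subset[OF that finite_keys] that
    by (induction A rule: finite_induct) (use assms in auto)
  from this[of "keys p"] show ?thesis
    by (simp add: sum_single_lookup)
qed

lemma obtain_key_maximizing:
  fixes f :: "'a \<Rightarrow> nat"
  assumes "p \<noteq> 0"
  obtains m where "m \<in> keys p" "\<And>m'. m' \<in> keys p \<Longrightarrow> f m' \<le> f m"
proof -
  have "Max (f ` keys p) \<in> f ` keys p"
    using assms by (intro Max_in) simp_all
  then obtain m where "m \<in> keys p" "f m = Max (f ` keys p)"
    by auto
  then show ?thesis
    using that by simp
qed

definition var_free :: "var \<Rightarrow> mpoly \<Rightarrow> bool" where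
  "var_free v p \<longleftrightarrow> (\<forall>m\<in>keys p. lookup m v = 0)"

lemma var_free_add: "var_free v p \<Longrightarrow> var_free v q \<Longrightarrow> var_free v (p + q)"
  unfolding var_free_def using keys_add[of p q] by auto

lemma var_free_uminus: "var_free v p \<Longrightarrow> var_free v (- p)"
  unfolding var_free_def by simp

lemma var_free_diff: "var_free v p \<Longrightarrow> var_free v q \<Longrightarrow> var_free v (p - q)"
  using var_free_add[of v p "- q"] var_free_uminus[of v q] by simp

lemma var_free_mult: "var_free v p \<Longrightarrow> var_free v q \<Longrightarrow> var_free v (p * q)"
  unfolding var_free_def using keys_mult[of p q] by (auto simp: lookup_add)

lemma var_free_power: "var_free v p \<Longrightarrow> var_free v (p ^ k)"
  by (induction k) (simp_all add: var_free_mult var_free_def[of v 1])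

lemma var_free_sum: "(\<And>i. i \<in> I \<Longrightarrow> var_free v (f i)) \<Longrightarrow> var_free v (sum f I)"
  unfolding var_free_def using keys_sum[of f I] by blast

lemma var_free_Var: "v \<noteq> w \<Longrightarrow> var_free v (Var w)"
  unfolding var_free_def Var_def by (simp add: lookup_single)

lemma var_free_single: "lookup m v = 0 \<Longrightarrow> var_free v (single m c)"
  unfolding var_free_def by simp

lemma pderiv_var_free:
  assumes "var_free v p"
  shows "pderiv_var v p = 0"
proof (rule poly_mapping_eqI)
  fix n
  have "n + single v 1 \<notin> keys p"
    using assms unfolding var_free_def by (auto simp: lookup_add)
  then show "lookup (pderiv_var v p) n = lookup 0 n"
    by (simp add: lookup_pderiv_var in_keys_iff)
qed

lemma mon_deg_eq: "mon_deg m = lookup m X1 + lookup m X2 + lookup m Y1 + lookup m Y2"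
proof -
  have "keys m \<subseteq> {X1, X2, Y1, Y2}"
    using var.exhaust by blast
  then have "mon_deg m = (\<Sum>v\<in>{X1, X2, Y1, Y2}. lookup m v)"
    unfolding mon_deg_def by (intro sum.mono_neutral_left) (auto simp: in_keys_iff)
  then show ?thesis
    by simp
qed

lemma mon_deg_add: "mon_deg (m + n) = mon_deg m + mon_deg n"
  by (simp add: mon_deg_eq lookup_add)

lemma mon_deg_single: "mon_deg (single v k) = k"
  by (cases v) (simp_all add: mon_deg_eq lookup_single)

lemma hom_of_deg_zero: "hom_of_deg d 0"
  unfolding hom_of_deg_def by simp

lemma hom_of_deg_add: "hom_of_deg d p \<Longrightarrow> hom_of_deg d q \<Longrightarrow> hom_of_deg d (p + q)"
  unfolding hom_of_deg_def using keys_add[of p q] by auto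

lemma hom_of_deg_uminus: "hom_of_deg d p \<Longrightarrow> hom_of_deg d (- p)"
  unfolding hom_of_deg_def by simp

lemma hom_of_deg_diff: "hom_of_deg d p \<Longrightarrow> hom_of_deg d q \<Longrightarrow> hom_of_deg d (p - q)"
  using hom_of_deg_add[of d p "- q"] hom_of_deg_uminus[of d q] by simp

lemma hom_of_deg_mult:
  "hom_of_deg a p \<Longrightarrow> hom_of_deg b q \<Longrightarrow> a + b = d \<Longrightarrow> hom_of_deg d (p * q)"
  unfolding hom_of_deg_def using keys_mult[of p q] by (auto simp: mon_deg_add)

lemma hom_of_deg_power: "hom_of_deg a p \<Longrightarrow> hom_of_deg (int k * a) (p ^ k)"
proof (induction k)
  case 0
  then show ?case
    by (simp add: hom_of_deg_def mon_deg_def)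
next
  case (Suc k)
  then show ?case
    by (auto intro: hom_of_deg_mult simp: algebra_simps)
qed

lemma hom_of_deg_sum: "(\<And>i. i \<in> I \<Longrightarrow> hom_of_deg d (f i)) \<Longrightarrow> hom_of_deg d (sum f I)"
  unfolding hom_of_deg_def using keys_sum[of f I] by blast

lemma hom_of_deg_single: "hom_of_deg (2 * int (mon_deg m)) (single m c)"
  unfolding hom_of_deg_def by simp

lemma hom_of_deg_Var: "hom_of_deg 2 (Var v)"
  unfolding Var_def using hom_of_deg_single[of "single v 1" 1] by (simp add: mon_deg_single)

lemma hom_of_deg_Const: "hom_of_deg 0 (Const c)"
  unfolding Const_def using hom_of_deg_single[of 0 c] by (simp add: mon_deg_def)

lemma hom_of_deg_unique:
  assumes "hom_of_deg a p" "hom_of_deg b p" "p \<noteq> 0"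
  shows "a = b"
proof -
  obtain m where "m \<in> keys p"
    using assms(3) by fastforce
  with assms(1,2) have "2 * int (mon_deg m) = a" "2 * int (mon_deg m) = b"
    unfolding hom_of_deg_def by blast+
  then show ?thesis
    by simp
qed

lemma hom_of_deg_mult_cancel:
  fixes p q :: mpoly
  assumes "hom_of_deg a p" "hom_of_deg b q" "q \<noteq> 0" "hom_of_deg d (p * q)"
  shows "hom_of_deg (d - b) p"
proof (cases "p = 0")
  case False
  have "hom_of_deg (a + b) (p * q)"
    by (rule hom_of_deg_mult[OF assms(1,2) refl])
  moreover have "p * q \<noteq> 0"
    using False assms(3) by simp
  ultimately have "a + b = d"
    using assms(4) hom_of_deg_unique by blast
  then have "d - b = a"
    by simp
  with assms(1) show ?thesis
    by simp
qed (simp add: hom_of_deg_zero)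

lemma hom_of_deg_summand:
  assumes p: "hom_of_deg a p" and q: "hom_of_deg b q" and pq: "hom_of_deg d (p + q)" "p + q \<noteq> 0"
  shows "hom_of_deg d p"
proof (cases "a = b")
  case True
  with p q have "hom_of_deg a (p + q)"
    by (simp add: hom_of_deg_add)
  then have "a = d"
    using pq by (rule hom_of_deg_unique)
  with p show ?thesis
    by simp
next
  case False
  have "m \<in> keys (p + q)" if "m \<in> keys p" for m
  proof -
    have "m \<notin> keys q"
      using that False p q unfolding hom_of_deg_def by auto
    with that show ?thesis
      by (simp add: in_keys_iff lookup_add)
  qed
  with pq(1) show ?thesis
    unfolding hom_of_deg_def by blast
qed

section \<open>Division by a linear factor\<close>

lemma Var_power: "Var v ^ k = single (single v k) 1"
  by (induction k) (simp_all add: Var_def mult_single flip: single_add)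

lemma lookup_Var_power_single:
  "0 < k \<Longrightarrow> lookup (Var v ^ k) (single w k) = (if v = w then 1 else 0)"
  unfolding Var_power by (auto simp: lookup_single when_def poly_mapping_eq_iff fun_eq_iff)

lemma linear_factor_nonzero:
  assumes "x \<noteq> y"
  shows "Var y - Var x \<noteq> 0"
proof
  assume "Var y - Var x = 0"
  then have "lookup (Var y - Var x) (single y 1) = 0"
    by simp
  moreover have "lookup (Var v) (single y 1) = (if v = y then 1 else 0)" for v
    using lookup_Var_power_single[of 1 v y] by simp
  ultimately show False
    using assms by (simp add: lookup_minus)
qed

lemma single_linear_factor_decomp:
  assumes "x \<noteq> y"
  obtains q r where "single m c = (Var y - Var x) * q + r" "var_free y r"
    "hom_of_deg (2 * int (mon_deg m) - 2) q"
proof -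
  define k where "k = lookup m y"
  define m0 where "m0 = m - single y k"
  have m: "m = m0 + single y k"
    unfolding m0_def k_def
    by (simp add: poly_mapping_eq_iff fun_eq_iff lookup_add lookup_minus lookup_single when_def)
  define S where "S = (\<Sum>i<k. Var x ^ (k - Suc i) * Var y ^ i)"
  have power: "Var y ^ k = (Var y - Var x) * S + Var x ^ k"
    using power_diff_sumr2[of "Var y" k "Var x"] unfolding S_def by (simp add: algebra_simps)
  have "single m c = single m0 c * Var y ^ k"
    unfolding Var_power m by (simp add: mult_single)
  also have "\<dots> = (Var y - Var x) * (single m0 c * S) + single m0 c * Var x ^ k"
    unfolding power by (simp add: algebra_simps)
  finally have "single m c = (Var y - Var x) * (single m0 c * S) + single m0 c * Var x ^ k" .
  moreover have "var_free y (single m0 c * Var x ^ k)"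
    using assms by (intro var_free_mult var_free_power var_free_Var var_free_single)
      (simp_all add: m0_def k_def lookup_minus)
  moreover have "hom_of_deg (2 * int (mon_deg m) - 2) (single m0 c * S)"
  proof (cases "k = 0")
    case False
    have "hom_of_deg (2 * int k - 2) S"
      unfolding S_def
    proof (rule hom_of_deg_sum)
      fix i assume "i \<in> {..<k}"
      then have "int (k - Suc i) * 2 + int i * 2 = 2 * int k - 2"
        by (simp add: of_nat_diff)
      then show "hom_of_deg (2 * int k - 2) (Var x ^ (k - Suc i) * Var y ^ i)"
        using hom_of_deg_mult[OF hom_of_deg_power[OF hom_of_deg_Var] hom_of_deg_power[OF hom_of_deg_Var]]
        by blast
    qed
    moreover have "mon_deg m = mon_deg m0 + k"
      by (simp add: m mon_deg_add mon_deg_single)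
    ultimately show ?thesis
      by (intro hom_of_deg_mult[OF hom_of_deg_single]) simp_all
  qed (simp add: S_def hom_of_deg_zero)
  ultimately show ?thesis
    using that by blast
qed

lemma linear_factor_decomp:
  assumes "x \<noteq> y"
  obtains q r where "p = (Var y - Var x) * q + r" "var_free y r"
    "\<And>d. hom_of_deg d p \<Longrightarrow> hom_of_deg (d - 2) q"
proof -
  define P where "P a \<longleftrightarrow> (\<exists>q r. a = (Var y - Var x) * q + r \<and> var_free y r
    \<and> (\<forall>d. hom_of_deg d p \<longrightarrow> hom_of_deg (d - 2) q))" for a
  have "P p"
  proof (rule poly_mapping_sum_induct[of P p])
    show "P 0"
      unfolding P_def by (intro exI[of _ 0]) (simp add: var_free_def hom_of_deg_zero)
  next
    fix m assume key: "m \<in> keys p"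
    obtain q r where "single m (lookup p m) = (Var y - Var x) * q + r" "var_free y r"
      "hom_of_deg (2 * int (mon_deg m) - 2) q"
      using single_linear_factor_decomp[OF assms] .
    moreover have "d = 2 * int (mon_deg m)" if "hom_of_deg d p" for d
      using that key unfolding hom_of_deg_def by simp
    ultimately show "P (single m (lookup p m))"
      unfolding P_def by blast
  next
    fix a b assume "P a" "P b"
    then obtain qa ra qb rb where a: "a = (Var y - Var x) * qa + ra" "var_free y ra"
        and b: "b = (Var y - Var x) * qb + rb" "var_free y rb"
        and deg: "\<forall>d. hom_of_deg d p \<longrightarrow> hom_of_deg (d - 2) qa"
          "\<forall>d. hom_of_deg d p \<longrightarrow> hom_of_deg (d - 2) qb"
      unfolding P_def by blast
    show "P (a + b)"
      unfolding P_def a(1) b(1)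
      by (rule exI[of _ "qa + qb"], rule exI[of _ "ra + rb"])
        (simp add: algebra_simps var_free_add a(2) b(2) deg hom_of_deg_add)
  qed
  then show ?thesis
    using that unfolding P_def by blast
qed

text \<open>Look at a monomial \<open>m\<close> of \<open>q\<close> of maximal \<open>y\<close>-degree: the coefficient of \<open>y m\<close>
  in \<open>(y - x) q\<close> is that of \<open>m\<close> in \<open>q\<close>.\<close>
lemma linear_factor_mult_var_free_imp_zero:
  assumes "x \<noteq> y" and free: "var_free y ((Var y - Var x) * q)"
  shows "q = 0"
proof (rule ccontr)
  assume "q \<noteq> 0"
  then obtain m where m: "m \<in> keys q" and max: "\<And>m'. m' \<in> keys q \<Longrightarrow> lookup m' y \<le> lookup m y"
    using obtain_key_maximizing[where f = "\<lambda>m. lookup m y"] by blast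
  have "lookup (Var x * q) (m + single y 1) = 0"
  proof (cases "0 < lookup m x")
    case True
    have "lookup (m + single y 1 - single x 1) y = lookup m y + 1"
      using assms(1) by (simp add: lookup_add lookup_minus lookup_single)
    then have "m + single y 1 - single x 1 \<notin> keys q"
      using max by fastforce
    with True assms(1) show ?thesis
      by (simp add: lookup_Var_mult lookup_add lookup_single in_keys_iff)
  qed (use assms(1) in \<open>simp add: lookup_Var_mult lookup_add lookup_single\<close>)
  then have "lookup ((Var y - Var x) * q) (m + single y 1) = lookup q m"
    by (simp add: left_diff_distrib lookup_minus lookup_Var_mult lookup_add)
  with m have "m + single y 1 \<in> keys ((Var y - Var x) * q)"
    by (simp add: in_keys_iff)
  with free have "lookup (m + single y 1) y = 0"
    unfolding var_free_def by blast
  then show False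
    by (simp add: lookup_add)
qed

lemma hom_of_deg_linear_factor_cofactor:
  assumes "x \<noteq> y" "hom_of_deg d ((Var y - Var x) * q)"
  shows "hom_of_deg (d - 2) q"
proof -
  obtain q' r where qr: "(Var y - Var x) * q = (Var y - Var x) * q' + r" "var_free y r"
    and q': "hom_of_deg (d - 2) q'"
    using linear_factor_decomp[OF assms(1)] assms(2) by metis
  have "var_free y ((Var y - Var x) * (q - q'))"
    using qr by (simp add: right_diff_distrib)
  then have "q - q' = 0"
    by (rule linear_factor_mult_var_free_imp_zero[OF assms(1)])
  with q' show ?thesis
    by simp
qed

lemma linear_factor_dvd_of_mult:
  assumes "x \<noteq> y" "var_free y s" "s \<noteq> 0" "s * a = (Var y - Var x) * b"
  obtains q where "a = (Var y - Var x) * q" "b = s * q"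
proof -
  obtain q r where qr: "a = (Var y - Var x) * q + r" "var_free y r"
    using linear_factor_decomp[OF assms(1)] by metis
  have eq: "(Var y - Var x) * (b - s * q) = s * r"
    using assms(4) qr(1) by (simp add: algebra_simps)
  have "var_free y ((Var y - Var x) * (b - s * q))"
    unfolding eq by (rule var_free_mult[OF assms(2) qr(2)])
  then have "b - s * q = 0"
    by (rule linear_factor_mult_var_free_imp_zero[OF assms(1)])
  then have "b = s * q"
    by simp
  with eq assms(3) have "r = 0"
    by simp
  with qr(1) \<open>b = s * q\<close> show ?thesis
    using that[of q] by simp
qed

section \<open>Uniqueness for the PDE\<close>

lemma pde_sol_diff:
  assumes "pde_sol g z" "pde_sol h w"
  shows "pde_sol (g - h) (z - w)"
proof -
  have "2 * (z - w) + pderiv_var Y1 (z - w) * (Var Y1 - Var X1) + pderiv_var Y2 (z - w) * (Var Y2 - Var X2)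
      = (2 * z + pderiv_var Y1 z * (Var Y1 - Var X1) + pderiv_var Y2 z * (Var Y2 - Var X2))
        - (2 * w + pderiv_var Y1 w * (Var Y1 - Var X1) + pderiv_var Y2 w * (Var Y2 - Var X2))"
    by (simp add: pderiv_var_diff algebra_simps)
  with assms show ?thesis
    unfolding pde_sol_def by simp
qed

text \<open>At a monomial \<open>m\<close> of \<open>z\<close> of maximal degree in the \<open>y\<close>'s, the operator multiplies the
  coefficient by \<open>2 + deg\<^sub>y m\<close>; the terms coming from the \<open>x\<^sub>i \<partial>z/\<partial>y\<^sub>i\<close> would need a monomial
  of higher \<open>y\<close>-degree.\<close>
lemma pde_sol_zero_imp_zero:
  assumes "pde_sol 0 z"
  shows "z = 0"
proof (rule ccontr)
  assume "z \<noteq> 0"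
  then obtain m where m: "m \<in> keys z"
    and max: "\<And>m'. m' \<in> keys z \<Longrightarrow> lookup m' Y1 + lookup m' Y2 \<le> lookup m Y1 + lookup m Y2"
    using obtain_key_maximizing[where f = "\<lambda>m. lookup m Y1 + lookup m Y2"] by blast
  have vanish: "lookup (Var x * pderiv_var y z) m = 0" if "x \<in> {X1, X2}" "y \<in> {Y1, Y2}" for x y
  proof (cases "0 < lookup m x")
    case True
    have "lookup (m - single x 1 + single y 1) Y1 + lookup (m - single x 1 + single y 1) Y2
        = lookup m Y1 + lookup m Y2 + 1"
      using that by (auto simp: lookup_add lookup_minus lookup_single)
    then have "m - single x 1 + single y 1 \<notin> keys z"
      using max by fastforce
    with that show ?thesis
      by (auto simp: lookup_Var_mult_pderiv_var_other in_keys_iff)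
  next
    case False
    with that show ?thesis
      by (auto simp: lookup_Var_mult_pderiv_var_other)
  qed
  have "2 * z + pderiv_var Y1 z * (Var Y1 - Var X1) + pderiv_var Y2 z * (Var Y2 - Var X2)
      = z + z + (Var Y1 * pderiv_var Y1 z - Var X1 * pderiv_var Y1 z)
        + (Var Y2 * pderiv_var Y2 z - Var X2 * pderiv_var Y2 z)"
    by (simp add: algebra_simps mult_2)
  then have "lookup (2 * z + pderiv_var Y1 z * (Var Y1 - Var X1) + pderiv_var Y2 z * (Var Y2 - Var X2)) m
      = (2 + of_nat (lookup m Y1) + of_nat (lookup m Y2)) * lookup z m"
    using vanish[of X1 Y1] vanish[of X2 Y2]
    by (simp only: lookup_add lookup_minus lookup_Var_mult_pderiv_var_same) (simp add: algebra_simps)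
  with assms have "(2 + of_nat (lookup m Y1) + of_nat (lookup m Y2)) * lookup z m = 0"
    unfolding pde_sol_def by simp
  moreover have "(2 + of_nat (lookup m Y1) + of_nat (lookup m Y2) :: rat) \<noteq> 0"
    by (simp add: add_pos_nonneg)
  ultimately show False
    using m by (simp add: in_keys_iff)
qed

lemma pde_sol_unique:
  assumes "pde_sol g z" "pde_sol g w"
  shows "z = w"
proof -
  have "pde_sol 0 (z - w)"
    using pde_sol_diff[OF assms] by simp
  then have "z - w = 0"
    by (rule pde_sol_zero_imp_zero)
  then show ?thesis
    by simp
qed

section \<open>The polynomial \<open>\<Omega>\<close>\<close>

abbreviation avg1 :: mpoly where "avg1 \<equiv> Const (1/2) * (Var X1 + Var Y1)"
abbreviation avg2 :: mpoly where "avg2 \<equiv> Const (1/2) * (Var X2 + Var Y2)"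

lemma Const_half_mult_two: "Const (1/2) * 2 = 1"
  by (simp add: Const_def mult_single flip: single_numeral)

lemma s1_eq: "s1 = t1 + t2"
  unfolding s1_def t1_def t2_def by (simp add: algebra_simps)

lemma s2_eq: "s2 = t1 * avg2 + t2 * avg1"
proof -
  have "t1 * avg2 + t2 * avg1 = Const (1/2) * 2 * (Var Y1 * Var Y2 - Var X1 * Var X2)"
    unfolding t1_def t2_def by (simp add: algebra_simps)
  then show ?thesis
    unfolding Const_half_mult_two s2_def by simp
qed

lemma linear_factor_mult_wpoly: "(Var y - Var x) * wpoly N x y = Var y ^ (N + 1) - Var x ^ (N + 1)"
  using power_diff_sumr2[of "Var y" "N + 1" "Var x"]
  by (simp add: wpoly_def lessThan_Suc_atMost mult.commute)

lemma Wpot_eq: "Wpot N = t1 * w1 N + t2 * w2 N"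
  unfolding Wpot_def t1_def t2_def w1_def w2_def linear_factor_mult_wpoly by simp

lemma t1_nonzero: "t1 \<noteq> 0"
  unfolding t1_def by (rule linear_factor_nonzero) simp

lemma var_free_t1: "var_free Y2 t1"
  unfolding t1_def by (intro var_free_diff var_free_Var) simp_all

lemma s1_nonzero: "s1 \<noteq> 0"
proof
  assume "s1 = 0"
  then have "lookup s1 (single Y1 1) = 0"
    by simp
  then show False
    using lookup_Var_power_single[of 1 _ Y1] by (simp add: s1_def lookup_add lookup_minus)
qed

lemma s2_nonzero: "s2 \<noteq> 0"
proof
  assume "s2 = 0"
  then have "pderiv_var Y1 s2 = 0"
    by (simp add: pderiv_var_free var_free_def)
  moreover have "pderiv_var Y1 s2 = Var Y2"
    by (simp add: s2_def pderiv_var_diff pderiv_var_Var_mult pderiv_var_free var_free_Var)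
  ultimately have "lookup (Var Y2) (single Y2 1) = 0"
    by simp
  then show False
    by (simp add: Var_def)
qed

lemma Wpot_nonzero: "Wpot N \<noteq> 0"
proof
  assume "Wpot N = 0"
  then have "lookup (Wpot N) (single Y1 (N + 1)) = 0"
    by simp
  moreover have "lookup (Var v ^ (N + 1)) (single Y1 (N + 1)) = (if v = Y1 then 1 else 0)" for v
    by (rule lookup_Var_power_single) simp
  ultimately show False
    unfolding Wpot_def lookup_add lookup_minus by simp
qed

lemma hom_of_deg_s1: "hom_of_deg 2 s1"
  unfolding s1_def by (intro hom_of_deg_diff hom_of_deg_add hom_of_deg_Var)

lemma hom_of_deg_s2: "hom_of_deg 4 s2"
  unfolding s2_def by (intro hom_of_deg_diff hom_of_deg_mult[OF hom_of_deg_Var hom_of_deg_Var]) simp_all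

lemma hom_of_deg_Var_power: "hom_of_deg (2 * int k) (Var v ^ k)"
  using hom_of_deg_power[OF hom_of_deg_Var, of k v] by (simp add: mult.commute)

lemma hom_of_deg_Wpot: "hom_of_deg (2 * int N + 2) (Wpot N)"
  using hom_of_deg_Var_power[of "N + 1"]
  unfolding Wpot_def by (intro hom_of_deg_diff hom_of_deg_add) (simp_all add: algebra_simps)

lemma hom_of_deg_wpoly: "hom_of_deg (2 * int N) (wpoly N x y)"
  unfolding wpoly_def
  by (intro hom_of_deg_sum hom_of_deg_mult[OF hom_of_deg_Var_power hom_of_deg_Var_power])
    (simp add: algebra_simps of_nat_diff)

lemma hom_of_deg_avg: "hom_of_deg 2 (Const c * (Var x + Var y))"
  using hom_of_deg_mult[OF hom_of_deg_Const hom_of_deg_add[OF hom_of_deg_Var hom_of_deg_Var]] by simp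

lemma homogeneous_imp_hom_of_deg:
  assumes "homogeneous p"
  obtains d where "hom_of_deg (2 * int d) p"
proof -
  obtain d where "\<forall>m\<in>keys p. mon_deg m = d"
    using assms unfolding homogeneous_def by blast
  then have "hom_of_deg (2 * int d) p"
    unfolding hom_of_deg_def by simp
  then show ?thesis
    by (rule that)
qed

text \<open>The degrees of the \<open>u\<^sub>i\<close> are forced, because \<open>W\<close> is homogeneous and nonzero.\<close>
lemma hom_of_deg_cofactors:
  assumes "homogeneous u1" "homogeneous u2" and W: "Wpot N = u1 * s1 + u2 * s2"
  shows "hom_of_deg (2 * int N) u1" "hom_of_deg (2 * int N - 2) u2"
proof -
  obtain d1 d2 where d1: "hom_of_deg (2 * int d1) u1" and d2: "hom_of_deg (2 * int d2) u2"
    using homogeneous_imp_hom_of_deg assms(1,2) by metis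
  have u1s1: "hom_of_deg (2 * int d1 + 2) (u1 * s1)"
    by (rule hom_of_deg_mult[OF d1 hom_of_deg_s1 refl])
  have u2s2: "hom_of_deg (2 * int d2 + 4) (u2 * s2)"
    by (rule hom_of_deg_mult[OF d2 hom_of_deg_s2 refl])
  have sum: "hom_of_deg (2 * int N + 2) (u1 * s1 + u2 * s2)" "u1 * s1 + u2 * s2 \<noteq> 0"
    using hom_of_deg_Wpot[of N] Wpot_nonzero[of N] W by simp_all
  from hom_of_deg_mult_cancel[OF d1 hom_of_deg_s1 s1_nonzero hom_of_deg_summand[OF u1s1 u2s2 sum]]
  show "hom_of_deg (2 * int N) u1"
    by simp
  from sum have "hom_of_deg (2 * int N + 2) (u2 * s2 + u1 * s1)" "u2 * s2 + u1 * s1 \<noteq> 0"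
    by (simp_all add: add.commute)
  from hom_of_deg_mult_cancel[OF d2 hom_of_deg_s2 s2_nonzero hom_of_deg_summand[OF u2s2 u1s1 this]]
  show "hom_of_deg (2 * int N - 2) u2"
    by simp
qed

text \<open>The \<open>\<theta>\<^sub>1\<close>- and \<open>\<theta>\<^sub>2\<close>-components of the morphism condition on \<open>1\<close> ask for
  \<open>t\<^sub>2 \<Omega> = t2_Omega\<close> and \<open>t\<^sub>1 \<Omega> = t1_Omega\<close>.\<close>
definition t2_Omega :: "nat \<Rightarrow> mpoly \<Rightarrow> mpoly \<Rightarrow> mpoly" where
  "t2_Omega N u1 u2 = w1 N - u1 - u2 * avg2"

definition t1_Omega :: "nat \<Rightarrow> mpoly \<Rightarrow> mpoly \<Rightarrow> mpoly" where
  "t1_Omega N u1 u2 = u1 + u2 * avg1 - w2 N"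

lemma t1_mult_t2_Omega:
  assumes "Wpot N = u1 * s1 + u2 * s2"
  shows "t1 * t2_Omega N u1 u2 = t2 * t1_Omega N u1 u2"
proof -
  have "t1 * t2_Omega N u1 u2 - t2 * t1_Omega N u1 u2 = Wpot N - u1 * s1 - u2 * s2"
    unfolding t2_Omega_def t1_Omega_def Wpot_eq s1_eq s2_eq by (simp add: algebra_simps)
  with assms show ?thesis
    by simp
qed

lemma exists_Omega:
  assumes "Wpot N = u1 * s1 + u2 * s2"
  obtains Om where "t2 * Om = t2_Omega N u1 u2" "t1 * Om = t1_Omega N u1 u2"
proof -
  have neq: "X2 \<noteq> Y2"
    by simp
  have "t1 * t2_Omega N u1 u2 = (Var Y2 - Var X2) * t1_Omega N u1 u2"
    using t1_mult_t2_Omega[OF assms] by (simp add: t2_def)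
  then obtain q where "t2_Omega N u1 u2 = (Var Y2 - Var X2) * q" "t1_Omega N u1 u2 = t1 * q"
    by (rule linear_factor_dvd_of_mult[OF neq var_free_t1 t1_nonzero])
  then show ?thesis
    using that[of q] by (simp add: t2_def)
qed

lemma hom_of_deg_Omega:
  assumes "t2 * Om = t2_Omega N u1 u2" "hom_of_deg (2 * int N) u1" "hom_of_deg (2 * int N - 2) u2"
  shows "hom_of_deg (2 * int N - 2) Om"
proof -
  have "hom_of_deg (2 * int N - 2 + 2) (u2 * avg2)"
    by (rule hom_of_deg_mult[OF assms(3) hom_of_deg_avg refl])
  then have "hom_of_deg (2 * int N) (t2_Omega N u1 u2)"
    unfolding t2_Omega_def w1_def using assms(2) by (simp add: hom_of_deg_diff hom_of_deg_wpoly)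
  with assms(1) show ?thesis
    unfolding t2_def by (intro hom_of_deg_linear_factor_cofactor[of X2 Y2]) simp_all
qed

lemma pderiv_var_linear_factor_mult:
  "x \<noteq> y \<Longrightarrow> pderiv_var y ((Var y - Var x) * p) = p + (Var y - Var x) * pderiv_var y p"
  by (simp only: left_diff_distrib pderiv_var_diff pderiv_var_Var_mult) (simp add: algebra_simps)

lemma pderiv_var_mult_avg:
  assumes "x \<noteq> y"
  shows "pderiv_var y (p * (Const c * (Var x + Var y)))
    = Const c * p + Const c * (Var x + Var y) * pderiv_var y p"
proof -
  have "p * (Const c * (Var x + Var y)) = Const c * (Var x * p) + Const c * (Var y * p)"
    by (simp add: algebra_simps)
  then show ?thesis
    using assms
    by (simp only: pderiv_var_add pderiv_var_Const_mult pderiv_var_Var_mult) (simp add: algebra_simps)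
qed

lemma var_free_wpoly: "v \<noteq> x \<Longrightarrow> v \<noteq> y \<Longrightarrow> var_free v (wpoly N x y)"
  unfolding wpoly_def by (intro var_free_sum var_free_mult var_free_power var_free_Var) auto

text \<open>Differentiate \<open>t\<^sub>2 \<Omega> = t2_Omega\<close> in \<open>y\<^sub>2\<close>, \<open>t\<^sub>1 \<Omega> = t1_Omega\<close> in \<open>y\<^sub>1\<close>, and add.\<close>
lemma Omega_pde_sol:
  assumes t2: "t2 * Om = t2_Omega N u1 u2" and t1: "t1 * Om = t1_Omega N u1 u2"
  shows "pde_sol (gamma u1 u2) Om"
proof -
  have "pderiv_var Y2 (t2 * Om) = pderiv_var Y2 (t2_Omega N u1 u2)"
    using t2 by simp
  then have E2: "Om + t2 * pderiv_var Y2 Om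
      = - pderiv_var Y2 u1 - (Const (1/2) * u2 + avg2 * pderiv_var Y2 u2)"
    unfolding t2_def t2_Omega_def w1_def
    by (simp add: pderiv_var_linear_factor_mult pderiv_var_diff pderiv_var_mult_avg
        pderiv_var_free var_free_wpoly)
  have "pderiv_var Y1 (t1 * Om) = pderiv_var Y1 (t1_Omega N u1 u2)"
    using t1 by simp
  then have E1: "Om + t1 * pderiv_var Y1 Om
      = pderiv_var Y1 u1 + (Const (1/2) * u2 + avg1 * pderiv_var Y1 u2)"
    unfolding t1_def t1_Omega_def w2_def
    by (simp add: pderiv_var_linear_factor_mult pderiv_var_diff pderiv_var_add pderiv_var_mult_avg
        pderiv_var_free var_free_wpoly)
  have "2 * Om + pderiv_var Y1 Om * (Var Y1 - Var X1) + pderiv_var Y2 Om * (Var Y2 - Var X2)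
      = (Om + t1 * pderiv_var Y1 Om) + (Om + t2 * pderiv_var Y2 Om)"
    unfolding t1_def t2_def by (simp add: algebra_simps mult_2)
  also have "\<dots> = gamma u1 u2"
    unfolding E1 E2 gamma_def by (simp add: algebra_simps)
  finally show ?thesis
    unfolding pde_sol_def .
qed

section \<open>The morphism \<open>\<chi>\<^sub>1\<close>\<close>

lemma koszul_d_components:
  "koszul_d a1 a2 b1 b2 f E0 = b1 * f E1 + b2 * f E2"
  "koszul_d a1 a2 b1 b2 f E1 = a1 * f E0 - b2 * f E12"
  "koszul_d a1 a2 b1 b2 f E2 = a2 * f E0 + b1 * f E12"
  "koszul_d a1 a2 b1 b2 f E12 = a1 * f E2 - a2 * f E1"
  by (simp_all add: koszul_d_def ext_add_def ext_smult_def ext_wedge_def contr1_def contr2_def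
      theta1_def theta2_def)

lemma chi1_components:
  "chi1 Om f E0 = f E0"
  "chi1 Om f E1 = f E1 + f E2 * avg2"
  "chi1 Om f E2 = f E1 + f E2 * avg1"
  "chi1 Om f E12 = f E0 * Om + f E12 * (Const (1/2) * (Var X1 + Var Y1 - Var X2 - Var Y2))"
  by (simp_all add: chi1_def lin_ext_def chi1_img_def)

text \<open>Componentwise, the two sides differ by multiples of \<open>t\<^sub>1 \<Omega> - t1_Omega\<close> and
  \<open>t\<^sub>2 \<Omega> - t2_Omega\<close>.\<close>
lemma chi1_commutes_koszul_d:
  assumes t2: "t2 * Om = t2_Omega N u1 u2" and t1: "t1 * Om = t1_Omega N u1 u2"
  shows "koszul_d (w1 N) (w2 N) t1 t2 (chi1 Om f) = chi1 Om (koszul_d u1 u2 s1 s2 f)"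
proof
  fix e
  define D1 where "D1 = t1 * Om - t1_Omega N u1 u2"
  define D2 where "D2 = t2 * Om - t2_Omega N u1 u2"
  have "D1 = 0" "D2 = 0"
    using assms by (simp_all add: D1_def D2_def)
  have "koszul_d (w1 N) (w2 N) t1 t2 (chi1 Om f) e = chi1 Om (koszul_d u1 u2 s1 s2 f) e
    + (case e of E0 \<Rightarrow> 0 | E1 \<Rightarrow> - f E0 * D2 | E2 \<Rightarrow> f E0 * D1
        | E12 \<Rightarrow> - f E1 * (D1 + D2) - f E2 * (avg2 * D1 + avg1 * D2))"
    unfolding D1_def D2_def t1_Omega_def t2_Omega_def s1_eq s2_eq
    by (cases e) (simp_all add: koszul_d_components chi1_components algebra_simps)
  with \<open>D1 = 0\<close> \<open>D2 = 0\<close> show "koszul_d (w1 N) (w2 N) t1 t2 (chi1 Om f) e = chi1 Om (koszul_d u1 u2 s1 s2 f) e"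
    by (simp split: ebasis.split)
qed

lemma ext_hom_deg_chi1:
  assumes Om: "hom_of_deg (2 * int N - 2) Om"
    and f: "ext_hom_deg (theta_deg (int N + 1) (2 * int N) (2 * int N - 2)) d f"
  shows "ext_hom_deg (theta_deg (int N + 1) (2 * int N) (2 * int N)) d (chi1 Om f)"
  unfolding ext_hom_deg_def
proof
  fix e
  have fe: "hom_of_deg (d - theta_deg (int N + 1) (2 * int N) (2 * int N - 2) e') (f e')" for e'
    using f unfolding ext_hom_deg_def by blast
  have q: "hom_of_deg 2 (Const (1/2) * (Var X1 + Var Y1 - Var X2 - Var Y2))"
    using hom_of_deg_Var[of X1] hom_of_deg_Var[of Y1] hom_of_deg_Var[of X2] hom_of_deg_Var[of Y2]
    by (intro hom_of_deg_mult[OF hom_of_deg_Const] hom_of_deg_diff hom_of_deg_add) simp_all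
  show "hom_of_deg (d - theta_deg (int N + 1) (2 * int N) (2 * int N) e) (chi1 Om f e)"
    using fe[of E0] fe[of E1] hom_of_deg_mult[OF fe[of E2] hom_of_deg_avg]
      hom_of_deg_mult[OF fe[of E0] Om, of "d - theta_deg (int N + 1) (2 * int N) (2 * int N) E12"]
      hom_of_deg_mult[OF fe[of E12] q, of "d - theta_deg (int N + 1) (2 * int N) (2 * int N) E12"]
    by (cases e) (auto simp: theta_deg_def chi1_components intro!: hom_of_deg_add)
qed

lemma graded_mf_morphism_chi1:
  assumes "t2 * Om = t2_Omega N u1 u2" "t1 * Om = t1_Omega N u1 u2" "hom_of_deg (2 * int N - 2) Om"
  shows "graded_mf_morphism (chi1 Om)
    (koszul_d u1 u2 s1 s2) (theta_deg (int N + 1) (2 * int N) (2 * int N - 2))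
    (koszul_d (w1 N) (w2 N) t1 t2) (theta_deg (int N + 1) (2 * int N) (2 * int N))"
  unfolding graded_mf_morphism_def ext_even_def ext_odd_def
  using chi1_commutes_koszul_d[OF assms(1,2)] ext_hom_deg_chi1[OF assms(3)]
  by (simp add: chi1_components)

lemma homotopic_proj0_chi1: "homotopic_to_module dX p q (\<lambda>f. proj0 (chi1 Om f)) proj0"
  unfolding homotopic_to_module_def in_ideal2_def proj0_def chi1_components
  by (intro exI[of _ 0] allI) simp

theorem lemmaA4:
  fixes N :: nat and u1 u2 :: mpoly
  assumes "N > 0"
    and "homogeneous u1" and "homogeneous u2"
    and "Wpot N = u1 * s1 + u2 * s2"
    and "msubst swap_xy u1 = u1" and "msubst swap_xy u2 = u2"
  shows "(\<exists>!z. pde_sol (gamma u1 u2) z) \<and>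
    (let Om = (THE z. pde_sol (gamma u1 u2) z);
         c = int N + 1
     in graded_mf_morphism (chi1 Om)
          (koszul_d u1 u2 s1 s2) (theta_deg c (2 * int N) (2 * int N - 2))
          (koszul_d (w1 N) (w2 N) t1 t2) (theta_deg c (2 * int N) (2 * int N))
        \<and> homotopic_to_module (koszul_d u1 u2 s1 s2) t1 t2
            (\<lambda>f. proj0 (chi1 Om f)) proj0)"
proof -
  obtain Om where t2: "t2 * Om = t2_Omega N u1 u2" and t1: "t1 * Om = t1_Omega N u1 u2"
    using exists_Omega[OF assms(4)] .
  have sol: "pde_sol (gamma u1 u2) Om"
    using Omega_pde_sol[OF t2 t1] .
  then have unique: "\<exists>!z. pde_sol (gamma u1 u2) z" and the: "(THE z. pde_sol (gamma u1 u2) z) = Om"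
    using pde_sol_unique by blast+
  have "hom_of_deg (2 * int N - 2) Om"
    using hom_of_deg_Omega[OF t2 hom_of_deg_cofactors[OF assms(2-4)]] .
  then show ?thesis
    unfolding Let_def the
    using unique graded_mf_morphism_chi1[OF t2 t1] homotopic_proj0_chi1 by blast
qed

end
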